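(* Let $m,n$ be positive integers and let $g,h$ be orientation-preserving $C^2$ diffeomorphisms of $I=[0,1]$ satisfying $gh^mg^{-1}=h^n$. Then $h$ and $ghg^{-1}$ commute. *)

theory Defs
  imports "HOL-Analysis.Analysis"
begin

text \<open>An orientation-preserving C^2 diffeomorphism of I = [0,1]: a strictly increasing
bijection of [0,1] onto itself which is twice continuously differentiable on [0,1]
(one-sided derivatives at the endpoints) with everywhere positive derivative
(so that its inverse is also C^2).\<close>

definition C2_diffeo_plus :: "(real \<Rightarrow> real) \<Rightarrow> bool" where
  "C2_diffeo_plus f \<longleftrightarrow>
     bij_betw f {0..1} {0..1} \<and> strict_mono_on {0..1} f \<and>
     (\<exists>f' f''. (\<forall>x\<in>{0..1}.
         (f has_real_derivative f' x) (at x within {0..1}) \<and>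
         (f' has_real_derivative f'' x) (at x within {0..1}) \<and>
         f' x > 0) \<and> continuous_on {0..1} f'')"

end

(* With f = g h g^-1 the hypothesis reads f^m = h^n, and u = f h f^-1 satisfies
   u^n = f h^n f^-1 = f f^m f^-1 = f^m = h^n.  So u and h are n-th roots of the same C^2
   diffeomorphism phi = h^n, and the claim h f = f h says precisely u = h.

   Two such roots agree, with equal derivatives, at every fixed point of phi.  On a component
   (a,b) of the complement of Fix(phi) either u - h has a constant sign, which is impossible
   since then u^n and h^n differ, or u and h agree at some point q.  In the latter case
   v = h^-1 u is a C^1 diffeomorphism commuting with phi, fixing q, with v' = 1 at a and b,
   and Kopell's lemma gives v = id on (a,b).

   Kopell's lemma is proved by bounded distortion: since ln phi' is Lipschitz, the derivatives
   of all iterates phi^k are comparable on an interval [c,d] between two points of the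
   phi-orbit of q.  Pushing [c,d] by phi^k close to the attracting endpoint, where v is almost
   an isometry, shows that all steps of a v-orbit in [c,d] have length bounded below, which is
   impossible for a monotone sequence in a bounded interval unless v fixes it. *)

theory Submission
  imports Defs
begin

lemma mean_value_abs:
  fixes f f' :: "real \<Rightarrow> real"
  assumes deriv: "\<And>x. x \<in> {a..b} \<Longrightarrow> (f has_real_derivative f' x) (at x within {a..b})"
    and "y \<in> {a..b}" "z \<in> {a..b}"
  obtains \<xi> where "min y z \<le> \<xi>" "\<xi> \<le> max y z" "\<bar>f z - f y\<bar> = \<bar>f' \<xi>\<bar> * \<bar>z - y\<bar>"
proof -
  have mvt: "\<exists>\<xi>\<in>{p..q}. f q - f p = f' \<xi> * (q - p)" if "p \<in> {a..b}" "q \<in> {a..b}" "p \<le> q" for p q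
  proof -
    have "\<exists>\<xi>\<in>{p..q}. f q - f p = (\<lambda>t. f' \<xi> * t) (q - p)"
    proof (rule mvt_very_simple[OF \<open>p \<le> q\<close>])
      fix x assume "p \<le> x" "x \<le> q"
      then have "(f has_real_derivative f' x) (at x within {p..q})"
        using deriv[of x] that by (auto intro: DERIV_subset)
      then show "(f has_derivative (\<lambda>t. f' x * t)) (at x within {p..q})"
        by (simp add: has_field_derivative_def)
    qed
    then show ?thesis by simp
  qed
  show ?thesis
  proof (cases "y \<le> z")
    case True
    with mvt assms(2,3) obtain \<xi> where "\<xi> \<in> {y..z}" "f z - f y = f' \<xi> * (z - y)" by blast
    with True show ?thesis by (intro that[of \<xi>]) (auto simp: abs_mult)
  next
    case False
    with mvt assms(2,3) obtain \<xi> where "\<xi> \<in> {z..y}" "f y - f z = f' \<xi> * (y - z)" by force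
    with False show ?thesis by (intro that[of \<xi>]) (auto simp: abs_mult abs_minus_commute)
  qed
qed

lemma lipschitz_on_interval_if_deriv_bounded:
  fixes f f' :: "real \<Rightarrow> real"
  assumes "\<And>x. x \<in> {a..b} \<Longrightarrow> (f has_real_derivative f' x) (at x within {a..b})"
    and "\<And>x. x \<in> {a..b} \<Longrightarrow> \<bar>f' x\<bar> \<le> B" and "0 \<le> B"
  shows "B-lipschitz_on {a..b} f"
proof (rule lipschitz_onI)
  fix y z assume "y \<in> {a..b}" "z \<in> {a..b}"
  then obtain \<xi> where \<xi>: "min z y \<le> \<xi>" "\<xi> \<le> max z y" "\<bar>f y - f z\<bar> = \<bar>f' \<xi>\<bar> * \<bar>y - z\<bar>"
    using mean_value_abs[OF assms(1)] by metis
  moreover have "\<xi> \<in> {a..b}" using \<xi>(1,2) \<open>y \<in> {a..b}\<close> \<open>z \<in> {a..b}\<close> by auto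
  ultimately have "\<bar>f' \<xi>\<bar> \<le> B" using assms(2) by blast
  with \<xi>(3) show "dist (f y) (f z) \<le> B * dist y z"
    by (simp add: dist_real_def mult_right_mono)
qed fact

section \<open>Orientation-preserving C^1 diffeomorphisms of [0,1]\<close>

definition C1_diffeo_plus :: "(real \<Rightarrow> real) \<Rightarrow> (real \<Rightarrow> real) \<Rightarrow> bool" where
  "C1_diffeo_plus F F' \<longleftrightarrow> bij_betw F {0..1} {0..1} \<and> strict_mono_on {0..1} F \<and>
     (\<forall>x\<in>{0..1}. (F has_real_derivative F' x) (at x within {0..1}) \<and> F' x > 0) \<and>
     continuous_on {0..1} F'"

context
  fixes F F' :: "real \<Rightarrow> real"
  assumes F: "C1_diffeo_plus F F'"
begin

lemma C1_diffeo_plus_bij: "bij_betw F {0..1} {0..1}"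
  using F unfolding C1_diffeo_plus_def by blast

lemma C1_diffeo_plus_has_deriv: "x \<in> {0..1} \<Longrightarrow> (F has_real_derivative F' x) (at x within {0..1})"
  using F unfolding C1_diffeo_plus_def by blast

lemma C1_diffeo_plus_deriv_pos: "x \<in> {0..1} \<Longrightarrow> F' x > 0"
  using F unfolding C1_diffeo_plus_def by blast

lemma C1_diffeo_plus_continuous_deriv: "continuous_on {0..1} F'"
  using F unfolding C1_diffeo_plus_def by blast

lemma C1_diffeo_plus_continuous: "continuous_on {0..1} F"
  using C1_diffeo_plus_has_deriv by (meson DERIV_continuous_on)

lemma C1_diffeo_plus_image: "F ` {0..1} = {0..1}"
  using C1_diffeo_plus_bij by (simp add: bij_betw_def)

lemma C1_diffeo_plus_in_unit: "x \<in> {0..1} \<Longrightarrow> F x \<in> {0..1}"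
  using C1_diffeo_plus_image by blast

lemma C1_diffeo_plus_less_iff: "x \<in> {0..1} \<Longrightarrow> y \<in> {0..1} \<Longrightarrow> F x < F y \<longleftrightarrow> x < y"
  using F strict_mono_on_less unfolding C1_diffeo_plus_def by blast

lemma C1_diffeo_plus_le_iff: "x \<in> {0..1} \<Longrightarrow> y \<in> {0..1} \<Longrightarrow> F x \<le> F y \<longleftrightarrow> x \<le> y"
  using F strict_mono_on_less_eq unfolding C1_diffeo_plus_def by blast

lemma C1_diffeo_plus_eq_iff: "x \<in> {0..1} \<Longrightarrow> y \<in> {0..1} \<Longrightarrow> F x = F y \<longleftrightarrow> x = y"
  using F strict_mono_on_eq unfolding C1_diffeo_plus_def by blast

lemma C1_diffeo_plus_f_inv_into_f: "y \<in> {0..1} \<Longrightarrow> F (inv_into {0..1} F y) = y"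
  using C1_diffeo_plus_image by (simp add: f_inv_into_f)

lemma C1_diffeo_plus_inv_into_f_f: "x \<in> {0..1} \<Longrightarrow> inv_into {0..1} F (F x) = x"
  using bij_betw_inv_into_left[OF C1_diffeo_plus_bij] .

lemma C1_diffeo_plus_Icc_invariant:
  assumes "lo \<in> {0..1}" "hi \<in> {0..1}" "F lo = lo" "F hi = hi" and w: "w \<in> {lo..hi}"
  shows "F w \<in> {lo..hi}"
proof -
  have "w \<in> {0..1}" using assms by auto
  then have "F lo \<le> F w" "F w \<le> F hi"
    using C1_diffeo_plus_le_iff[OF assms(1)] C1_diffeo_plus_le_iff[OF _ assms(2)] w by auto
  with assms(3,4) show ?thesis by simp
qed

lemma C1_diffeo_plus_fixes_endpoints: "F 0 = 0" "F 1 = 1"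
proof -
  have "0 \<in> F ` {0..1}" "1 \<in> F ` {0..1}" using C1_diffeo_plus_image by auto
  then obtain z w where z: "z \<in> {0..1}" "F z = 0" and w: "w \<in> {0..1}" "F w = 1"
    by (metis imageE)
  have "F 0 \<le> F z" "F w \<le> F 1"
    using C1_diffeo_plus_le_iff[of 0 z] C1_diffeo_plus_le_iff[of w 1] z w by auto
  moreover have "F 0 \<in> {0..1}" "F 1 \<in> {0..1}"
    using C1_diffeo_plus_in_unit[of 0] C1_diffeo_plus_in_unit[of 1] by auto
  ultimately show "F 0 = 0" "F 1 = 1" using z w by auto
qed

lemma C1_diffeo_plus_mean_value:
  assumes "y \<in> {0..1}" "z \<in> {0..1}"
  obtains \<xi> where "min y z \<le> \<xi>" "\<xi> \<le> max y z" "\<bar>F z - F y\<bar> = F' \<xi> * \<bar>z - y\<bar>"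
proof -
  obtain \<xi> where \<xi>: "min y z \<le> \<xi>" "\<xi> \<le> max y z" "\<bar>F z - F y\<bar> = \<bar>F' \<xi>\<bar> * \<bar>z - y\<bar>"
    using mean_value_abs[OF C1_diffeo_plus_has_deriv assms] by blast
  moreover have "F' \<xi> > 0" using \<xi> assms by (intro C1_diffeo_plus_deriv_pos) auto
  ultimately show ?thesis using that by simp
qed

lemma C1_diffeo_plus_lipschitz: "\<exists>B. B-lipschitz_on {0..1} F"
proof -
  obtain B where "\<forall>x\<in>{0..1}. \<bar>F' x\<bar> \<le> B"
    using compact_imp_bounded[OF compact_continuous_image[OF C1_diffeo_plus_continuous_deriv]]
    by (force simp: bounded_real)
  then have "B-lipschitz_on {0..1} F"
    by (intro lipschitz_on_interval_if_deriv_bounded[OF C1_diffeo_plus_has_deriv]) force+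
  then show ?thesis ..
qed

end

lemma C1_diffeo_plus_compose:
  assumes F: "C1_diffeo_plus F F'" and G: "C1_diffeo_plus G G'"
  shows "C1_diffeo_plus (\<lambda>x. G (F x)) (\<lambda>x. G' (F x) * F' x)"
  unfolding C1_diffeo_plus_def
proof (intro conjI ballI)
  show "bij_betw (\<lambda>x. G (F x)) {0..1} {0..1}"
    using bij_betw_trans[of F "{0..1}" "{0..1}" G] F G unfolding C1_diffeo_plus_def o_def by blast
  show "strict_mono_on {0..1} (\<lambda>x. G (F x))"
  proof (rule strict_mono_onI)
    fix r s :: real assume rs: "r \<in> {0..1}" "s \<in> {0..1}" "r < s"
    then have "F r < F s" using C1_diffeo_plus_less_iff[OF F] by blast
    then show "G (F r) < G (F s)"
      using C1_diffeo_plus_less_iff[OF G] C1_diffeo_plus_in_unit[OF F] rs by blast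
  qed
  fix x :: real assume x: "x \<in> {0..1}"
  have "((G \<circ> F) has_real_derivative G' (F x) * F' x) (at x within {0..1})"
    using C1_diffeo_plus_has_deriv[OF G C1_diffeo_plus_in_unit[OF F x]] C1_diffeo_plus_image[OF F]
      C1_diffeo_plus_has_deriv[OF F x] by (intro DERIV_image_chain) auto
  then show "((\<lambda>x. G (F x)) has_real_derivative G' (F x) * F' x) (at x within {0..1})"
    by (simp add: o_def)
  show "G' (F x) * F' x > 0"
    using C1_diffeo_plus_deriv_pos[OF G C1_diffeo_plus_in_unit[OF F x]] C1_diffeo_plus_deriv_pos[OF F x]
    by simp
next
  show "continuous_on {0..1} (\<lambda>x. G' (F x) * F' x)"
    using C1_diffeo_plus_in_unit[OF F]
    by (intro continuous_intros continuous_on_compose2[OF C1_diffeo_plus_continuous_deriv[OF G]]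
        C1_diffeo_plus_continuous[OF F] C1_diffeo_plus_continuous_deriv[OF F]) auto
qed

lemma C1_diffeo_plus_inv_into:
  assumes F: "C1_diffeo_plus F F'"
  shows "C1_diffeo_plus (inv_into {0..1} F) (\<lambda>y. 1 / F' (inv_into {0..1} F y))"
  unfolding C1_diffeo_plus_def
proof (intro conjI ballI)
  let ?G = "inv_into {0..1} F"
  show "bij_betw ?G {0..1} {0..1}"
    using F unfolding C1_diffeo_plus_def by (simp add: bij_betw_inv_into)
  have G_in_unit: "?G y \<in> {0..1}" if "y \<in> {0..1}" for y
    using C1_diffeo_plus_image[OF F] that by (metis inv_into_into)
  show "strict_mono_on {0..1} ?G"
    unfolding strict_mono_on_def
    by (metis F G_in_unit C1_diffeo_plus_f_inv_into_f C1_diffeo_plus_less_iff)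
  have G_cont: "continuous_on {0..1} ?G"
    using continuous_on_inv[OF C1_diffeo_plus_continuous[OF F], of ?G] C1_diffeo_plus_image[OF F]
      C1_diffeo_plus_inv_into_f_f[OF F] by auto
  then show "continuous_on {0..1} (\<lambda>y. 1 / F' (?G y))"
    using G_in_unit C1_diffeo_plus_deriv_pos[OF F]
    by (intro continuous_intros continuous_on_compose2[OF C1_diffeo_plus_continuous_deriv[OF F]])
      (auto intro!: less_imp_neq[symmetric])
  fix y :: real assume y: "y \<in> {0..1}"
  define x where "x = ?G y"
  have x: "x \<in> {0..1}" "F x = y" "F' x > 0"
    using G_in_unit[OF y] C1_diffeo_plus_f_inv_into_f[OF F y] C1_diffeo_plus_deriv_pos[OF F]
    by (auto simp: x_def)
  have "(F has_derivative (*) (F' x)) (at x within {0..1})"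
    using C1_diffeo_plus_has_deriv[OF F x(1)] by (simp add: has_field_derivative_def)
  then have "(?G has_derivative (*) (inverse (F' x))) (at (F x) within F ` {0..1})"
    by (rule has_derivative_inverse_within)
      (use G_cont C1_diffeo_plus_image[OF F] x C1_diffeo_plus_inv_into_f_f[OF F] in
        \<open>auto simp: continuous_on_eq_continuous_within o_def fun_eq_iff\<close>)
  then show "(?G has_real_derivative 1 / F' (?G y)) (at y within {0..1})"
    using x C1_diffeo_plus_image[OF F] by (simp add: has_field_derivative_def inverse_eq_divide x_def)
  show "1 / F' (?G y) > 0" using x by (simp add: x_def)
qed

lemma C1_diffeo_plus_deriv_unique:
  assumes F: "C1_diffeo_plus F F'" and G: "C1_diffeo_plus G G'"
    and eq: "\<forall>x\<in>{0..1}. F x = G x" and x: "x \<in> {0..1}"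
  shows "F' x = G' x"
proof -
  have G_deriv: "(G has_derivative (*) (G' x)) (at x within {0..1})"
    using C1_diffeo_plus_has_deriv[OF G x] by (simp add: has_field_derivative_def)
  have "(F has_derivative (*) (G' x)) (at x within {0..1})"
    by (rule has_derivative_transform[OF x _ G_deriv]) (use eq in blast)
  then have "(F has_real_derivative G' x) (at x within {0..1})"
    by (simp add: has_field_derivative_def)
  moreover have "x islimpt {0..1::real}" using x by simp
  then have "at x within {0..1} \<noteq> bot" by (simp add: trivial_limit_within)
  ultimately show ?thesis
    using C1_diffeo_plus_has_deriv[OF F x] has_field_derivative_unique by blast
qed

definition iterate_deriv :: "(real \<Rightarrow> real) \<Rightarrow> (real \<Rightarrow> real) \<Rightarrow> nat \<Rightarrow> real \<Rightarrow> real" where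
  "iterate_deriv F F' k x = (\<Prod>i<k. F' ((F ^^ i) x))"

lemma iterate_deriv_Suc: "iterate_deriv F F' (Suc k) x = F' ((F ^^ k) x) * iterate_deriv F F' k x"
  by (simp add: iterate_deriv_def)

lemma funpow_fixpoint: "F a = a \<Longrightarrow> (F ^^ k) a = a"
  by (induction k) auto

lemma iterate_deriv_fixpoint: "F e = e \<Longrightarrow> iterate_deriv F F' k e = F' e ^ k"
  by (simp add: iterate_deriv_def funpow_fixpoint)

lemma C1_diffeo_plus_funpow:
  assumes F: "C1_diffeo_plus F F'"
  shows "C1_diffeo_plus (F ^^ k) (iterate_deriv F F' k)"
proof (induction k)
  case 0
  have "C1_diffeo_plus (\<lambda>x. x) (\<lambda>x. 1)"
    unfolding C1_diffeo_plus_def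
    by (auto simp: strict_mono_on_def bij_betw_def intro: derivative_eq_intros)
  then show ?case by (simp add: iterate_deriv_def id_def)
next
  case (Suc k)
  have "C1_diffeo_plus (\<lambda>x. F ((F ^^ k) x)) (\<lambda>x. F' ((F ^^ k) x) * iterate_deriv F F' k x)"
    using C1_diffeo_plus_compose[OF Suc F] .
  moreover have "(\<lambda>x. F ((F ^^ k) x)) = F ^^ Suc k" by auto
  moreover have "(\<lambda>x. F' ((F ^^ k) x) * iterate_deriv F F' k x) = iterate_deriv F F' (Suc k)"
    by (auto simp: iterate_deriv_Suc)
  ultimately show ?case by simp
qed

lemma iterate_deriv_pos: "C1_diffeo_plus F F' \<Longrightarrow> x \<in> {0..1} \<Longrightarrow> iterate_deriv F F' N x > 0"
  by (rule C1_diffeo_plus_deriv_pos[OF C1_diffeo_plus_funpow])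

lemma C2_diffeo_plus_imp_C1_lipschitz_ln_deriv:
  assumes "C2_diffeo_plus F"
  obtains F' L where "C1_diffeo_plus F F'" "L-lipschitz_on {0..1} (\<lambda>x. ln (F' x))"
proof -
  obtain F' F'' where D: "\<And>x. x \<in> {0..1} \<Longrightarrow> (F has_real_derivative F' x) (at x within {0..1})"
      "\<And>x. x \<in> {0..1} \<Longrightarrow> (F' has_real_derivative F'' x) (at x within {0..1})"
      "\<And>x. x \<in> {0..1} \<Longrightarrow> F' x > 0" and cont: "continuous_on {0..1} F''"
    using assms unfolding C2_diffeo_plus_def by blast
  have F: "C1_diffeo_plus F F'"
    using assms D DERIV_continuous_on[OF D(2)] unfolding C2_diffeo_plus_def C1_diffeo_plus_def by blast
  obtain B where B: "\<And>x. x \<in> {0..1} \<Longrightarrow> \<bar>F'' x\<bar> \<le> B"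
    using compact_imp_bounded[OF compact_continuous_image[OF cont compact_Icc]]
    by (force simp: bounded_real)
  obtain x0 where x0: "x0 \<in> {0..1}" "\<And>x. x \<in> {0..1} \<Longrightarrow> F' x0 \<le> F' x"
    using continuous_attains_inf[OF compact_Icc _ C1_diffeo_plus_continuous_deriv[OF F]] by fastforce
  define c where "c = F' x0"
  have c: "c > 0" "\<And>x. x \<in> {0..1} \<Longrightarrow> c \<le> F' x" using x0 D(3) by (auto simp: c_def)
  have "((\<lambda>x. ln (F' x)) has_real_derivative F'' x / F' x) (at x within {0..1})"
    if "x \<in> {0..1}" for x
    using DERIV_chain2[OF DERIV_ln_divide[OF D(3)[OF that]] D(2)[OF that]] by simp
  moreover have "\<bar>F'' x / F' x\<bar> \<le> B / c" if "x \<in> {0..1}" for x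
  proof -
    have "\<bar>F'' x / F' x\<bar> = \<bar>F'' x\<bar> / F' x" using D(3)[OF that] by (simp add: abs_divide)
    also have "\<dots> \<le> B / c" using B[OF that] c(1) c(2)[OF that] by (intro frac_le) auto
    finally show ?thesis .
  qed
  moreover have "0 \<le> B" using B[of 0] by simp
  ultimately have "(B / c)-lipschitz_on {0..1} (\<lambda>x. ln (F' x))"
    using c by (intro lipschitz_on_interval_if_deriv_bounded) auto
  with F show ?thesis by (rule that)
qed

lemma lipschitz_ln_deriv_compose:
  assumes F: "C1_diffeo_plus F F'" and G: "C1_diffeo_plus G G'"
    and LF: "A-lipschitz_on {0..1} (\<lambda>x. ln (F' x))" and LG: "B-lipschitz_on {0..1} (\<lambda>x. ln (G' x))"
  shows "\<exists>C. C-lipschitz_on {0..1} (\<lambda>x. ln (G' (F x) * F' x))"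
proof -
  obtain M where "M-lipschitz_on {0..1} F" using C1_diffeo_plus_lipschitz[OF F] by blast
  moreover have "B-lipschitz_on (F ` {0..1}) (\<lambda>x. ln (G' x))" using LG C1_diffeo_plus_image[OF F] by simp
  ultimately have "(B * M)-lipschitz_on {0..1} (\<lambda>x. ln (G' (F x)))" by (rule lipschitz_on_compose2)
  then have "(B * M + A)-lipschitz_on {0..1} (\<lambda>x. ln (G' (F x)) + ln (F' x))"
    using LF by (rule lipschitz_on_add)
  moreover have "ln (G' (F x) * F' x) = ln (G' (F x)) + ln (F' x)" if "x \<in> {0..1}" for x
    using C1_diffeo_plus_deriv_pos[OF G C1_diffeo_plus_in_unit[OF F that]]
      C1_diffeo_plus_deriv_pos[OF F that] by (simp add: ln_mult)
  ultimately show ?thesis by (blast intro: lipschitz_on_transform)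
qed

lemma lipschitz_ln_iterate_deriv:
  assumes F: "C1_diffeo_plus F F'" and L: "L-lipschitz_on {0..1} (\<lambda>x. ln (F' x))"
  shows "\<exists>C. C-lipschitz_on {0..1} (\<lambda>x. ln (iterate_deriv F F' k x))"
proof (induction k)
  case 0
  have "0-lipschitz_on {0..1} (\<lambda>x::real. ln (iterate_deriv F F' 0 x))"
    by (simp add: iterate_deriv_def lipschitz_on_constant)
  then show ?case ..
next
  case (Suc k)
  then obtain C where "C-lipschitz_on {0..1} (\<lambda>x. ln (iterate_deriv F F' k x))" by blast
  from lipschitz_ln_deriv_compose[OF C1_diffeo_plus_funpow[OF F] F this L]
  obtain C' where "C'-lipschitz_on {0..1} (\<lambda>x. ln (F' ((F ^^ k) x) * iterate_deriv F F' k x))"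
    by blast
  then have "C'-lipschitz_on {0..1} (\<lambda>x. ln (iterate_deriv F F' (Suc k) x))"
    by (simp only: iterate_deriv_Suc)
  then show ?case by (rule exI)
qed

section \<open>Orbits of a C^1 diffeomorphism\<close>

lemma continuous_ne_on_interval_cases:
  fixes G H :: "real \<Rightarrow> real"
  assumes "continuous_on {a..b} G" "continuous_on {a..b} H" and ne: "\<forall>z\<in>{a<..<b}. G z \<noteq> H z"
  shows "(\<forall>z\<in>{a<..<b}. G z < H z) \<or> (\<forall>z\<in>{a<..<b}. H z < G z)"
proof (rule ccontr)
  assume "\<not> ?thesis"
  then obtain y z where yz: "y \<in> {a<..<b}" "z \<in> {a<..<b}" "\<not> G y < H y" "\<not> H z < G z"
    by blast
  moreover have "G y \<noteq> H y" "G z \<noteq> H z" using ne yz by auto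
  ultimately have "G z - H z < 0" "0 < G y - H y" by linarith+
  have "continuous_on {a<..<b} (\<lambda>t. G t - H t)"
    using assms(1,2) by (intro continuous_intros) (auto elim!: continuous_on_subset)
  then have "connected ((\<lambda>t. G t - H t) ` {a<..<b})"
    using connected_Ioo by (rule connected_continuous_image)
  then have "{G z - H z..G y - H y} \<subseteq> (\<lambda>t. G t - H t) ` {a<..<b}"
    using yz by (intro connected_contains_Icc) auto
  then have "0 \<in> (\<lambda>t. G t - H t) ` {a<..<b}"
    using \<open>G z - H z < 0\<close> \<open>0 < G y - H y\<close> by auto
  with ne show False by auto
qed

lemma monoseq_shift_diff_sum_le:
  fixes s :: "nat \<Rightarrow> real"
  assumes "monoseq s" and s_in: "\<And>k. s k \<in> {0..1}"
  shows "(\<Sum>i<N. \<bar>s (i + M) - s i\<bar>) \<le> M"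
proof -
  have telescope: "(\<Sum>i<N. s (i + M) - s i) = (\<Sum>j<M. s (N + j) - s j)"
  proof (induction N)
    case (Suc N)
    have "(\<Sum>j<M. s (N + j)) + s (N + M) = s N + (\<Sum>j<M. s (Suc N + j))"
      by (induction M) (auto simp: add.commute add.left_commute)
    with Suc show ?case by (simp add: sum_subtractf algebra_simps)
  qed simp
  from \<open>monoseq s\<close> have "(\<forall>i. s i \<le> s (i + M)) \<or> (\<forall>i. s (i + M) \<le> s i)"
    unfolding monoseq_def by (meson le_add1)
  then have "(\<Sum>i<N. \<bar>s (i + M) - s i\<bar>) = \<bar>\<Sum>i<N. s (i + M) - s i\<bar>"
  proof
    assume "\<forall>i. s i \<le> s (i + M)"
    then show ?thesis by (simp add: abs_of_nonneg sum_nonneg)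
  next
    assume dec: "\<forall>i. s (i + M) \<le> s i"
    then have "(\<Sum>i<N. \<bar>s (i + M) - s i\<bar>) = - (\<Sum>i<N. s (i + M) - s i)"
      by (simp add: abs_of_nonpos sum_negf[symmetric])
    also have "\<dots> = \<bar>\<Sum>i<N. s (i + M) - s i\<bar>"
      using dec by (simp add: abs_of_nonpos sum_nonpos)
    finally show ?thesis .
  qed
  also have "\<dots> = \<bar>\<Sum>j<M. s (N + j) - s j\<bar>" by (simp only: telescope)
  also have "\<dots> \<le> (\<Sum>j<M. \<bar>s (N + j) - s j\<bar>)" by (rule sum_abs)
  also have "\<dots> \<le> (\<Sum>j<M. 1)"
  proof (rule sum_mono)
    fix j show "\<bar>s (N + j) - s j\<bar> \<le> 1" using s_in[of "N + j"] s_in[of j] by (auto simp: abs_le_iff)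
  qed
  finally show ?thesis by simp
qed

lemma fixpoint_free_component:
  fixes \<phi> :: "real \<Rightarrow> real"
  assumes cont: "continuous_on {0..1} \<phi>" and ends: "\<phi> 0 = 0" "\<phi> 1 = 1"
    and x: "x \<in> {0..1}" "\<phi> x \<noteq> x"
  obtains a b where "0 \<le> a" "a < x" "x < b" "b \<le> 1" "\<phi> a = a" "\<phi> b = b"
    "\<forall>z\<in>{a<..<b}. \<phi> z \<noteq> z"
proof -
  define Fix where "Fix = {y \<in> {0..1}. \<phi> y - y = 0}"
  have "closed Fix"
    unfolding Fix_def using cont
    by (intro continuous_closed_preimage_constant continuous_intros) auto
  define A where "A = Fix \<inter> {..x}"
  define B where "B = Fix \<inter> {x..}"
  have A: "closed A" "0 \<in> A" "bdd_above A"
    using \<open>closed Fix\<close> ends x by (auto simp: A_def Fix_def bdd_above_def)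
  have B: "closed B" "1 \<in> B" "bdd_below B"
    using \<open>closed Fix\<close> ends x by (auto simp: B_def Fix_def bdd_below_def)
  have "Sup A \<in> A" using A closed_contains_Sup by blast
  have "Inf B \<in> B" using B closed_contains_Inf by blast
  show ?thesis
  proof (rule that)
    show "0 \<le> Sup A" "Sup A < x" "\<phi> (Sup A) = Sup A"
      using \<open>Sup A \<in> A\<close> x by (auto simp: A_def Fix_def order.order_iff_strict)
    show "x < Inf B" "Inf B \<le> 1" "\<phi> (Inf B) = Inf B"
      using \<open>Inf B \<in> B\<close> x by (auto simp: B_def Fix_def order.order_iff_strict)
    show "\<forall>z\<in>{Sup A<..<Inf B}. \<phi> z \<noteq> z"
    proof (intro ballI notI)
      fix z assume z: "z \<in> {Sup A<..<Inf B}" "\<phi> z = z"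
      have "0 \<le> Sup A" "Inf B \<le> 1" using \<open>Sup A \<in> A\<close> \<open>Inf B \<in> B\<close> by (auto simp: A_def B_def Fix_def)
      with z have "z \<in> A \<or> z \<in> B" by (auto simp: A_def B_def Fix_def)
      then show False using cSup_upper[of z A] cInf_lower[of z B] A(3) B(3) z(1) by auto
    qed
  qed
qed

context
  fixes F F' :: "real \<Rightarrow> real"
  assumes F: "C1_diffeo_plus F F'"
begin

lemma funpow_in_unit: "x \<in> {0..1} \<Longrightarrow> (F ^^ k) x \<in> {0..1}"
  using C1_diffeo_plus_in_unit[OF C1_diffeo_plus_funpow[OF F]] .

lemma funpow_fixed_iff:
  assumes x: "x \<in> {0..1}" and "k > 0"
  shows "(F ^^ k) x = x \<longleftrightarrow> F x = x"
proof -
  have "(F ^^ k) x < x" if "F x < x"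
    using \<open>k > 0\<close>
  proof (induction k rule: nat_induct_non_zero)
    case (Suc k)
    then have "F ((F ^^ k) x) < F x" using C1_diffeo_plus_less_iff[OF F funpow_in_unit[OF x] x] by simp
    with that show ?case by simp
  qed (use that in simp)
  moreover have "x < (F ^^ k) x" if "x < F x"
    using \<open>k > 0\<close>
  proof (induction k rule: nat_induct_non_zero)
    case (Suc k)
    then have "F x < F ((F ^^ k) x)" using C1_diffeo_plus_less_iff[OF F x funpow_in_unit[OF x]] by simp
    with that show ?case by simp
  qed (use that in simp)
  ultimately show ?thesis
    by (metis funpow_fixpoint less_irrefl linorder_neqE_linordered_idom)
qed

lemma funpow_maps_fixpoint_interval:
  assumes "0 \<le> a" "b \<le> 1" "F a = a" "F b = b" "y \<in> {a<..<b}"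
  shows "(F ^^ k) y \<in> {a<..<b}"
proof -
  have "(F ^^ k) a < (F ^^ k) y" "(F ^^ k) y < (F ^^ k) b"
    using C1_diffeo_plus_less_iff[OF C1_diffeo_plus_funpow[OF F]] assms by auto
  then show ?thesis using funpow_fixpoint[of F a] funpow_fixpoint[of F b] assms by auto
qed

lemma orbit_monoseq:
  assumes y: "y \<in> {0..1}"
  shows "monoseq (\<lambda>k. (F ^^ k) y)"
proof -
  have step: "(F ^^ Suc k) y = (F ^^ k) (F y)" for k by (simp add: funpow_swap1)
  have "(F ^^ k) (F y) \<le> (F ^^ k) y \<longleftrightarrow> F y \<le> y" for k
    using C1_diffeo_plus_le_iff[OF C1_diffeo_plus_funpow[OF F]] C1_diffeo_plus_in_unit[OF F y] y
    by blast
  then show ?thesis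
    unfolding monoseq_Suc step by (metis linear)
qed

lemma orbit_shift_gap_sum_le:
  assumes "y \<in> {0..1}"
  shows "(\<Sum>i<N. \<bar>(F ^^ i) ((F ^^ M) y) - (F ^^ i) y\<bar>) \<le> M"
  using monoseq_shift_diff_sum_le[OF orbit_monoseq[OF assms] funpow_in_unit[OF assms], where N = N and M = M]
  by (simp add: funpow_add)

lemma orbit_tendsto_fixpoint:
  assumes y: "y \<in> {0..1}"
  obtains L where "F L = L" "(\<lambda>k. (F ^^ k) y) \<longlonglongrightarrow> L"
proof -
  let ?s = "\<lambda>k. (F ^^ k) y"
  have s_in: "?s k \<in> {0..1}" for k using funpow_in_unit[OF y] .
  have "Bseq ?s" using s_in by (intro BseqI'[of _ 1]) auto
  then have "convergent ?s" using orbit_monoseq[OF y] by (rule Bseq_monoseq_convergent)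
  then obtain L where L: "?s \<longlonglongrightarrow> L" unfolding convergent_def by blast
  have L_in: "L \<in> {0..1}"
    by (rule closed_sequentially[OF closed_atLeastAtMost _ L]) (use s_in in simp)
  have "(\<lambda>k. F (?s k)) \<longlonglongrightarrow> F L"
    by (rule continuous_on_tendsto_compose[OF C1_diffeo_plus_continuous[OF F] L L_in])
      (intro always_eventually allI s_in)
  moreover have "(\<lambda>k. F (?s k)) \<longlonglongrightarrow> L"
    using LIMSEQ_Suc[OF L] by simp
  ultimately have "F L = L" by (rule LIMSEQ_unique)
  then show ?thesis using L by (rule that)
qed

lemma orbit_tendsto_endpoint_of:
  assumes ab: "0 \<le> a" "a < b" "b \<le> 1" "F a = a" "F b = b"
    and free: "\<forall>z\<in>{a<..<b}. F z \<noteq> z" and y: "y \<in> {a<..<b}"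
  obtains L where "L \<in> {a, b}" "(\<lambda>k. (F ^^ k) y) \<longlonglongrightarrow> L"
proof -
  have y01: "y \<in> {0..1}" using y ab by auto
  obtain L where L: "F L = L" "(\<lambda>k. (F ^^ k) y) \<longlonglongrightarrow> L"
    using orbit_tendsto_fixpoint[OF y01] .
  have "(F ^^ k) y \<in> {a..b}" for k
    using funpow_maps_fixpoint_interval[OF ab(1,3,4,5) y, of k] by auto
  then have "L \<in> {a..b}" by (rule closed_sequentially[OF closed_atLeastAtMost _ L(2)])
  with free L(1) have "L \<in> {a, b}" by force
  then show ?thesis using L(2) by (rule that)
qed

lemma orbit_tendsto_endpoint:
  assumes ab: "0 \<le> a" "a < b" "b \<le> 1" "F a = a" "F b = b"
    and free: "\<forall>z\<in>{a<..<b}. F z \<noteq> z"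
  obtains e where "e \<in> {a, b}" "\<And>y. y \<in> {a<..<b} \<Longrightarrow> (\<lambda>k. (F ^^ k) y) \<longlonglongrightarrow> e"
proof -
  have s_in: "(F ^^ k) y \<in> {a<..<b}" if "y \<in> {a<..<b}" for k y
    using funpow_maps_fixpoint_interval[OF ab(1,3,4,5) that] .
  have "continuous_on {a..b} F" "continuous_on {a..b} (\<lambda>z. z)"
    using C1_diffeo_plus_continuous[OF F] ab by (auto intro: continuous_on_id elim: continuous_on_subset)
  with free consider "\<forall>z\<in>{a<..<b}. F z < z" | "\<forall>z\<in>{a<..<b}. z < F z"
    using continuous_ne_on_interval_cases by blast
  then show ?thesis
  proof cases
    case 1
    show ?thesis
    proof (rule that[of a])
      fix y assume y: "y \<in> {a<..<b}"
      then obtain L where L: "L \<in> {a, b}" "(\<lambda>k. (F ^^ k) y) \<longlonglongrightarrow> L"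
        using orbit_tendsto_endpoint_of[OF ab free] by blast
      have "decseq (\<lambda>k. (F ^^ k) y)"
        unfolding decseq_Suc_iff using 1 s_in[OF y] by (auto intro: less_imp_le)
      then have "L \<le> y" using decseq_ge[OF _ L(2), of 0] by simp
      with L y show "(\<lambda>k. (F ^^ k) y) \<longlonglongrightarrow> a" by auto
    qed simp
  next
    case 2
    show ?thesis
    proof (rule that[of b])
      fix y assume y: "y \<in> {a<..<b}"
      then obtain L where L: "L \<in> {a, b}" "(\<lambda>k. (F ^^ k) y) \<longlonglongrightarrow> L"
        using orbit_tendsto_endpoint_of[OF ab free] by blast
      have "incseq (\<lambda>k. (F ^^ k) y)"
        unfolding incseq_Suc_iff using 2 s_in[OF y] by (auto intro: less_imp_le)
      then have "y \<le> L" using incseq_le[OF _ L(2), of 0] by simp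
      with L y show "(\<lambda>k. (F ^^ k) y) \<longlonglongrightarrow> b" by auto
    qed simp
  qed
qed

end

lemma funpow_less_funpow:
  assumes U: "C1_diffeo_plus U U'" and H: "C1_diffeo_plus H H'"
    and ab: "0 \<le> a" "b \<le> 1" "U a = a" "U b = b" "H a = a" "H b = b"
    and less: "\<forall>y\<in>{a<..<b}. U y < H y" and y: "y \<in> {a<..<b}" and "k > 0"
  shows "(U ^^ k) y < (H ^^ k) y"
  using \<open>k > 0\<close>
proof (induction k rule: nat_induct_non_zero)
  case 1
  then show ?case using less y by simp
next
  case (Suc k)
  have in_ab: "(U ^^ k) y \<in> {a<..<b}" "(H ^^ k) y \<in> {a<..<b}"
    using funpow_maps_fixpoint_interval[OF U ab(1,2,3,4) y] funpow_maps_fixpoint_interval[OF H ab(1,2,5,6) y]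
    by auto
  then have "U ((U ^^ k) y) < H ((U ^^ k) y)" using less by blast
  also have "\<dots> < H ((H ^^ k) y)"
    using Suc.IH in_ab ab C1_diffeo_plus_less_iff[OF H] by auto
  finally show ?case by simp
qed

lemma funpow_commute:
  assumes P: "C1_diffeo_plus P P'" and v: "C1_diffeo_plus v v'"
    and comm: "\<forall>y\<in>{0..1}. v (P y) = P (v y)" and y: "y \<in> {0..1}"
  shows "(v ^^ j) ((P ^^ k) y) = (P ^^ k) ((v ^^ j) y)"
proof -
  have v_Pk: "v ((P ^^ k) z) = (P ^^ k) (v z)" if "z \<in> {0..1}" for z
    using that
  proof (induction k)
    case (Suc k)
    then show ?case using comm funpow_in_unit[OF P Suc.prems, of k] by simp
  qed simp
  show ?thesis
    using y
  proof (induction j)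
    case (Suc j)
    then show ?case using v_Pk[OF funpow_in_unit[OF v Suc.prems, of j]] by simp
  qed simp
qed

lemma funpow_commute_fixpoint:
  assumes P: "C1_diffeo_plus P P'" and v: "C1_diffeo_plus v v'"
    and comm: "\<forall>y\<in>{0..1}. v (P y) = P (v y)" and x: "x \<in> {0..1}"
    and fixed: "v ((P ^^ j) x) = (P ^^ j) x"
  shows "v x = x"
proof -
  have "(P ^^ j) (v x) = (P ^^ j) x" using funpow_commute[OF P v comm x, of 1 j] fixed by simp
  then show ?thesis
    using C1_diffeo_plus_eq_iff[OF C1_diffeo_plus_funpow[OF P] C1_diffeo_plus_in_unit[OF v x] x] by simp
qed

section \<open>Kopell's lemma\<close>

lemma funpow_expansion:
  fixes v :: "real \<Rightarrow> real"
  assumes maps: "\<And>y. y \<in> W \<Longrightarrow> v y \<in> W"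
    and expands: "\<And>y z. y \<in> W \<Longrightarrow> z \<in> W \<Longrightarrow> \<kappa> * \<bar>y - z\<bar> \<le> \<bar>v y - v z\<bar>"
    and "0 \<le> \<kappa>" "y \<in> W" "z \<in> W"
  shows "\<kappa> ^ j * \<bar>y - z\<bar> \<le> \<bar>(v ^^ j) y - (v ^^ j) z\<bar>"
proof (induction j)
  case (Suc j)
  have in_W: "(v ^^ i) x \<in> W" if "x \<in> W" for i x
    using that by (induction i) (auto intro: maps)
  have "\<kappa> ^ Suc j * \<bar>y - z\<bar> = \<kappa> * (\<kappa> ^ j * \<bar>y - z\<bar>)" by simp
  also have "\<dots> \<le> \<kappa> * \<bar>(v ^^ j) y - (v ^^ j) z\<bar>" using Suc \<open>0 \<le> \<kappa>\<close> by (rule mult_left_mono)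
  also have "\<dots> \<le> \<bar>(v ^^ Suc j) y - (v ^^ Suc j) z\<bar>"
    using expands in_W \<open>y \<in> W\<close> \<open>z \<in> W\<close> by simp
  finally show ?case .
qed simp

lemma C1_diffeo_plus_expanding_near_deriv_one:
  assumes v: "C1_diffeo_plus v v'" and e: "e \<in> {0..1}" "v' e = 1" and "\<epsilon> > 0"
  obtains \<delta> where "\<delta> > 0"
    "\<And>y z. y \<in> {0..1} \<Longrightarrow> z \<in> {0..1} \<Longrightarrow> \<bar>y - e\<bar> < \<delta> \<Longrightarrow> \<bar>z - e\<bar> < \<delta> \<Longrightarrow>
       (1 - \<epsilon>) * \<bar>y - z\<bar> \<le> \<bar>v y - v z\<bar>"
proof -
  obtain \<delta> where \<delta>: "\<delta> > 0" "\<forall>x\<in>{0..1}. dist x e < \<delta> \<longrightarrow> dist (v' x) (v' e) < \<epsilon>"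
    using C1_diffeo_plus_continuous_deriv[OF v] e(1) \<open>\<epsilon> > 0\<close> unfolding continuous_on_iff by blast
  show ?thesis
  proof (rule that[OF \<delta>(1)])
    fix y z assume yz: "y \<in> {0..1}" "z \<in> {0..1}" "\<bar>y - e\<bar> < \<delta>" "\<bar>z - e\<bar> < \<delta>"
    obtain \<xi> where \<xi>: "min z y \<le> \<xi>" "\<xi> \<le> max z y" "\<bar>v y - v z\<bar> = v' \<xi> * \<bar>y - z\<bar>"
      using C1_diffeo_plus_mean_value[OF v yz(2,1)] by blast
    have "\<xi> \<in> {0..1}" "\<bar>\<xi> - e\<bar> < \<delta>" using \<xi> yz by auto
    then have "1 - \<epsilon> \<le> v' \<xi>" using \<delta>(2) e(2) by (force simp: dist_real_def)
    then show "(1 - \<epsilon>) * \<bar>y - z\<bar> \<le> \<bar>v y - v z\<bar>" using \<xi>(3) by (simp add: mult_right_mono)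
  qed
qed

lemma C1_diffeo_plus_funpow_half_expanding_near_deriv_one:
  assumes v: "C1_diffeo_plus v v'" and e: "e \<in> {0..1}" "v' e = 1"
  obtains \<delta> where "\<delta> > 0"
    "\<And>lo hi y z. lo \<in> {0..1} \<Longrightarrow> hi \<in> {0..1} \<Longrightarrow> v lo = lo \<Longrightarrow> v hi = hi \<Longrightarrow>
       \<bar>lo - e\<bar> < \<delta> \<Longrightarrow> \<bar>hi - e\<bar> < \<delta> \<Longrightarrow> y \<in> {lo..hi} \<Longrightarrow> z \<in> {lo..hi} \<Longrightarrow>
       \<bar>y - z\<bar> \<le> 2 * \<bar>(v ^^ j) y - (v ^^ j) z\<bar>"
proof -
  define \<epsilon> :: real where "\<epsilon> = 1 / (2 * (real j + 1))"
  have \<epsilon>: "\<epsilon> > 0" "\<epsilon> \<le> 1" by (auto simp: \<epsilon>_def field_simps)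
  have "1 + real j * - \<epsilon> \<le> (1 + - \<epsilon>) ^ j" using \<epsilon> by (intro Bernoulli_inequality) auto
  moreover have "real j * \<epsilon> \<le> 1 / 2" by (auto simp: \<epsilon>_def field_simps)
  ultimately have half: "1 / 2 \<le> (1 - \<epsilon>) ^ j" by simp
  obtain \<delta> where \<delta>: "\<delta> > 0" and expands: "\<And>y z. y \<in> {0..1} \<Longrightarrow> z \<in> {0..1} \<Longrightarrow>
      \<bar>y - e\<bar> < \<delta> \<Longrightarrow> \<bar>z - e\<bar> < \<delta> \<Longrightarrow> (1 - \<epsilon>) * \<bar>y - z\<bar> \<le> \<bar>v y - v z\<bar>"
    using C1_diffeo_plus_expanding_near_deriv_one[OF v e \<epsilon>(1)] by blast
  show ?thesis
  proof (rule that[OF \<delta>])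
    fix lo hi y z
    assume lohi: "lo \<in> {0..1}" "hi \<in> {0..1}" "v lo = lo" "v hi = hi" "\<bar>lo - e\<bar> < \<delta>" "\<bar>hi - e\<bar> < \<delta>"
      and yz: "y \<in> {lo..hi}" "z \<in> {lo..hi}"
    have "(1 - \<epsilon>) ^ j * \<bar>y - z\<bar> \<le> \<bar>(v ^^ j) y - (v ^^ j) z\<bar>"
    proof (rule funpow_expansion[where W = "{lo..hi}"])
      show "v w \<in> {lo..hi}" if "w \<in> {lo..hi}" for w
        by (rule C1_diffeo_plus_Icc_invariant[OF v lohi(1-4) that])
      show "(1 - \<epsilon>) * \<bar>y' - z'\<bar> \<le> \<bar>v y' - v z'\<bar>" if "y' \<in> {lo..hi}" "z' \<in> {lo..hi}" for y' z'
        using that lohi by (intro expands) auto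
    qed (use \<epsilon> yz in auto)
    moreover have "1 / 2 * \<bar>y - z\<bar> \<le> (1 - \<epsilon>) ^ j * \<bar>y - z\<bar>"
      using half by (rule mult_right_mono) simp
    ultimately show "\<bar>y - z\<bar> \<le> 2 * \<bar>(v ^^ j) y - (v ^^ j) z\<bar>" by simp
  qed
qed

(* P ^^ k moves [c, d] close to e, where v' e = 1 makes every power of v almost an isometry. *)
lemma commuting_power_eventually_half_expanding:
  assumes P: "C1_diffeo_plus P P'" and v: "C1_diffeo_plus v v'" and e: "e \<in> {0..1}" "v' e = 1"
    and comm: "\<forall>y\<in>{0..1}. v (P y) = P (v y)"
    and cd: "0 \<le> c" "c \<le> d" "d \<le> 1" "v c = c" "v d = d"
    and to_e: "(\<lambda>k. (P ^^ k) c) \<longlonglongrightarrow> e" "(\<lambda>k. (P ^^ k) d) \<longlonglongrightarrow> e"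
  obtains k where "\<And>y z. y \<in> {c..d} \<Longrightarrow> z \<in> {c..d} \<Longrightarrow>
      \<bar>(P ^^ k) y - (P ^^ k) z\<bar> \<le> 2 * \<bar>(P ^^ k) ((v ^^ j) y) - (P ^^ k) ((v ^^ j) z)\<bar>"
proof -
  obtain \<delta> where \<delta>: "\<delta> > 0" and half_expanding: "\<And>lo hi y z. lo \<in> {0..1} \<Longrightarrow> hi \<in> {0..1} \<Longrightarrow>
      v lo = lo \<Longrightarrow> v hi = hi \<Longrightarrow> \<bar>lo - e\<bar> < \<delta> \<Longrightarrow> \<bar>hi - e\<bar> < \<delta> \<Longrightarrow>
      y \<in> {lo..hi} \<Longrightarrow> z \<in> {lo..hi} \<Longrightarrow> \<bar>y - z\<bar> \<le> 2 * \<bar>(v ^^ j) y - (v ^^ j) z\<bar>"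
    using C1_diffeo_plus_funpow_half_expanding_near_deriv_one[OF v e, where j = j] by blast
  have "\<forall>\<^sub>F k in sequentially. dist ((P ^^ k) c) e < \<delta> \<and> dist ((P ^^ k) d) e < \<delta>"
    using tendstoD[OF to_e(1) \<delta>] tendstoD[OF to_e(2) \<delta>] by (rule eventually_conj)
  then obtain k where k: "\<bar>(P ^^ k) c - e\<bar> < \<delta>" "\<bar>(P ^^ k) d - e\<bar> < \<delta>"
    unfolding dist_real_def eventually_sequentially by blast
  have cd01: "c \<in> {0..1}" "d \<in> {0..1}" using cd by auto
  have Pk: "C1_diffeo_plus (P ^^ k) (iterate_deriv P P' k)" by (rule C1_diffeo_plus_funpow[OF P])
  have fixed: "v ((P ^^ k) c) = (P ^^ k) c" "v ((P ^^ k) d) = (P ^^ k) d"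
    using funpow_commute[OF P v comm, of _ 1 k] cd01 cd by auto
  show ?thesis
  proof (rule that)
    fix y z assume yz: "y \<in> {c..d}" "z \<in> {c..d}"
    then have yz01: "y \<in> {0..1}" "z \<in> {0..1}" using cd by auto
    have "(P ^^ k) y \<in> {(P ^^ k) c..(P ^^ k) d}" "(P ^^ k) z \<in> {(P ^^ k) c..(P ^^ k) d}"
      using yz C1_diffeo_plus_le_iff[OF Pk] cd01 yz01 by auto
    then have "\<bar>(P ^^ k) y - (P ^^ k) z\<bar> \<le> 2 * \<bar>(v ^^ j) ((P ^^ k) y) - (v ^^ j) ((P ^^ k) z)\<bar>"
      by (rule half_expanding[OF C1_diffeo_plus_in_unit[OF Pk cd01(1)]
            C1_diffeo_plus_in_unit[OF Pk cd01(2)] fixed k])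
    also have "\<dots> = 2 * \<bar>(P ^^ k) ((v ^^ j) y) - (P ^^ k) ((v ^^ j) z)\<bar>"
      using funpow_commute[OF P v comm] yz01 by simp
    finally show "\<bar>(P ^^ k) y - (P ^^ k) z\<bar> \<le> 2 * \<bar>(P ^^ k) ((v ^^ j) y) - (P ^^ k) ((v ^^ j) z)\<bar>" .
  qed
qed

lemma iterate_deriv_distortion:
  assumes F: "C1_diffeo_plus F F'" and L: "L-lipschitz_on {0..1} (\<lambda>x. ln (F' x))"
    and cd: "0 \<le> c" "c \<le> d" "d \<le> 1"
    and S: "\<And>N. (\<Sum>i<N. \<bar>(F ^^ i) d - (F ^^ i) c\<bar>) \<le> S"
    and \<xi>: "\<xi>1 \<in> {c..d}" "\<xi>2 \<in> {c..d}"
  shows "iterate_deriv F F' N \<xi>1 \<le> exp (L * S) * iterate_deriv F F' N \<xi>2"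
proof -
  have \<xi>01: "\<xi>1 \<in> {0..1}" "\<xi>2 \<in> {0..1}" and cd01: "c \<in> {0..1}" "d \<in> {0..1}"
    using \<xi> cd by auto
  have ln_iterate_deriv: "ln (iterate_deriv F F' N \<xi>) = (\<Sum>i<N. ln (F' ((F ^^ i) \<xi>)))"
    if "\<xi> \<in> {0..1}" for \<xi>
    unfolding iterate_deriv_def
    by (rule ln_prod) (use C1_diffeo_plus_deriv_pos[OF F funpow_in_unit[OF F that]] in \<open>auto simp: less_imp_neq[symmetric]\<close>)
  have orbit_gap: "\<bar>(F ^^ i) \<xi>1 - (F ^^ i) \<xi>2\<bar> \<le> \<bar>(F ^^ i) d - (F ^^ i) c\<bar>" for i
  proof -
    have between: "(F ^^ i) c \<le> (F ^^ i) \<xi> \<and> (F ^^ i) \<xi> \<le> (F ^^ i) d" if "\<xi> \<in> {c..d}" for \<xi>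
      using that cd01 cd C1_diffeo_plus_le_iff[OF C1_diffeo_plus_funpow[OF F]] by auto
    show ?thesis using between[OF \<xi>(1)] between[OF \<xi>(2)] by linarith
  qed
  have "ln (iterate_deriv F F' N \<xi>1) - ln (iterate_deriv F F' N \<xi>2)
      = (\<Sum>i<N. ln (F' ((F ^^ i) \<xi>1)) - ln (F' ((F ^^ i) \<xi>2)))"
    using ln_iterate_deriv \<xi>01 by (simp add: sum_subtractf)
  also have "\<dots> \<le> (\<Sum>i<N. L * \<bar>(F ^^ i) d - (F ^^ i) c\<bar>)"
  proof (rule sum_mono)
    fix i
    have "ln (F' ((F ^^ i) \<xi>1)) - ln (F' ((F ^^ i) \<xi>2)) \<le> L * \<bar>(F ^^ i) \<xi>1 - (F ^^ i) \<xi>2\<bar>"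
      using lipschitz_onD[OF L funpow_in_unit[OF F \<xi>01(1)] funpow_in_unit[OF F \<xi>01(2)], of i i]
      by (simp add: dist_real_def)
    also have "\<dots> \<le> L * \<bar>(F ^^ i) d - (F ^^ i) c\<bar>"
      using orbit_gap lipschitz_on_nonneg[OF L] by (rule mult_left_mono)
    finally show "ln (F' ((F ^^ i) \<xi>1)) - ln (F' ((F ^^ i) \<xi>2)) \<le> L * \<bar>(F ^^ i) d - (F ^^ i) c\<bar>" .
  qed
  also have "\<dots> \<le> L * S"
    using S lipschitz_on_nonneg[OF L] by (simp add: sum_distrib_left[symmetric] mult_left_mono)
  finally have "ln (iterate_deriv F F' N \<xi>1) \<le> L * S + ln (iterate_deriv F F' N \<xi>2)" by simp
  then have "exp (ln (iterate_deriv F F' N \<xi>1)) \<le> exp (L * S + ln (iterate_deriv F F' N \<xi>2))"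
    by simp
  then show ?thesis using iterate_deriv_pos[OF F] \<xi>01 by (simp add: exp_add)
qed

lemma commuting_orbit_step_lower_bound:
  assumes P: "C1_diffeo_plus P P'" and v: "C1_diffeo_plus v v'" and e: "e \<in> {0..1}" "v' e = 1"
    and comm: "\<forall>y\<in>{0..1}. v (P y) = P (v y)"
    and cd: "0 \<le> c" "c \<le> d" "d \<le> 1" "v c = c" "v d = d"
    and to_e: "(\<lambda>k. (P ^^ k) c) \<longlonglongrightarrow> e" "(\<lambda>k. (P ^^ k) d) \<longlonglongrightarrow> e"
    and distortion: "\<And>N \<xi>1 \<xi>2. \<xi>1 \<in> {c..d} \<Longrightarrow> \<xi>2 \<in> {c..d} \<Longrightarrow>
      iterate_deriv P P' N \<xi>1 \<le> K * iterate_deriv P P' N \<xi>2"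
    and x: "x \<in> {c..d}"
  shows "\<bar>v x - x\<bar> \<le> 2 * K * \<bar>(v ^^ Suc j) x - (v ^^ j) x\<bar>"
proof -
  define s where "s j = (v ^^ j) x" for j
  have cd01: "c \<in> {0..1}" "d \<in> {0..1}" using cd by auto
  have s_in: "s i \<in> {c..d}" for i
    unfolding s_def using C1_diffeo_plus_Icc_invariant[OF C1_diffeo_plus_funpow[OF v] cd01
        funpow_fixpoint[of v c] funpow_fixpoint[of v d] x] cd by simp
  have s01: "s i \<in> {0..1}" for i using s_in[of i] cd by auto
  obtain k where k: "\<And>y z. y \<in> {c..d} \<Longrightarrow> z \<in> {c..d} \<Longrightarrow>
      \<bar>(P ^^ k) y - (P ^^ k) z\<bar> \<le> 2 * \<bar>(P ^^ k) ((v ^^ j) y) - (P ^^ k) ((v ^^ j) z)\<bar>"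
    using commuting_power_eventually_half_expanding[OF P v e comm cd to_e] by blast
  have Pk: "C1_diffeo_plus (P ^^ k) (iterate_deriv P P' k)" by (rule C1_diffeo_plus_funpow[OF P])
  obtain \<xi>1 where \<xi>1: "min (s j) (s (Suc j)) \<le> \<xi>1" "\<xi>1 \<le> max (s j) (s (Suc j))"
      "\<bar>(P ^^ k) (s (Suc j)) - (P ^^ k) (s j)\<bar> = iterate_deriv P P' k \<xi>1 * \<bar>s (Suc j) - s j\<bar>"
    using C1_diffeo_plus_mean_value[OF Pk s01 s01] by blast
  obtain \<xi>2 where \<xi>2: "min (s 0) (s 1) \<le> \<xi>2" "\<xi>2 \<le> max (s 0) (s 1)"
      "\<bar>(P ^^ k) (s 1) - (P ^^ k) (s 0)\<bar> = iterate_deriv P P' k \<xi>2 * \<bar>s 1 - s 0\<bar>"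
    using C1_diffeo_plus_mean_value[OF Pk s01 s01] by blast
  have \<xi>_in: "\<xi>1 \<in> {c..d}" "\<xi>2 \<in> {c..d}"
    using \<xi>1(1,2) \<xi>2(1,2) s_in[of j] s_in[of "Suc j"] s_in[of 0] s_in[of 1] by auto
  have s_shift: "(v ^^ j) (s 1) = s (Suc j)" "(v ^^ j) (s 0) = s j"
    by (simp_all add: s_def funpow_swap1)
  define D1 where "D1 = iterate_deriv P P' k \<xi>1"
  define D2 where "D2 = iterate_deriv P P' k \<xi>2"
  have "D2 > 0" using iterate_deriv_pos[OF P] \<xi>_in cd01 by (auto simp: D2_def)
  have "D2 * \<bar>v x - x\<bar> \<le> 2 * (D1 * \<bar>s (Suc j) - s j\<bar>)"
    using k[OF s_in s_in, of 1 0] \<xi>1(3) \<xi>2(3) s_shift by (simp add: s_def D1_def D2_def)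
  also have "\<dots> \<le> 2 * (K * D2 * \<bar>s (Suc j) - s j\<bar>)"
    using distortion[OF \<xi>_in] by (simp add: D1_def D2_def mult_right_mono)
  finally have "D2 * \<bar>v x - x\<bar> \<le> D2 * (2 * K * \<bar>s (Suc j) - s j\<bar>)" by (simp add: mult_ac)
  with \<open>D2 > 0\<close> show ?thesis by (simp add: s_def)
qed

lemma Kopell_bounded_distortion:
  assumes P: "C1_diffeo_plus P P'" and v: "C1_diffeo_plus v v'" and e: "e \<in> {0..1}" "v' e = 1"
    and comm: "\<forall>y\<in>{0..1}. v (P y) = P (v y)"
    and cd: "0 \<le> c" "c \<le> d" "d \<le> 1" "v c = c" "v d = d"
    and to_e: "(\<lambda>k. (P ^^ k) c) \<longlonglongrightarrow> e" "(\<lambda>k. (P ^^ k) d) \<longlonglongrightarrow> e"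
    and distortion: "\<And>N \<xi>1 \<xi>2. \<xi>1 \<in> {c..d} \<Longrightarrow> \<xi>2 \<in> {c..d} \<Longrightarrow>
      iterate_deriv P P' N \<xi>1 \<le> K * iterate_deriv P P' N \<xi>2"
    and x: "x \<in> {c..d}"
  shows "v x = x"
proof (rule ccontr)
  assume moved: "v x \<noteq> x"
  have x01: "x \<in> {0..1}" using cd x by auto
  have "monoseq (\<lambda>j. (v ^^ j) x)" by (rule orbit_monoseq[OF v x01])
  from monoseq_shift_diff_sum_le[OF this funpow_in_unit[OF v x01], where M = 1]
  have total_steps: "(\<Sum>j<N. \<bar>(v ^^ Suc j) x - (v ^^ j) x\<bar>) \<le> 1" for N by simp
  have "1 \<le> K" using distortion[of c c 0] cd by (simp add: iterate_deriv_def)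
  have "real N * \<bar>v x - x\<bar> \<le> 2 * K" for N
  proof -
    have "real N * \<bar>v x - x\<bar> = (\<Sum>j<N. \<bar>v x - x\<bar>)" by simp
    also have "\<dots> \<le> (\<Sum>j<N. 2 * K * \<bar>(v ^^ Suc j) x - (v ^^ j) x\<bar>)"
      by (rule sum_mono) (rule commuting_orbit_step_lower_bound[OF assms])
    also have "\<dots> = 2 * K * (\<Sum>j<N. \<bar>(v ^^ Suc j) x - (v ^^ j) x\<bar>)" by (simp add: sum_distrib_left)
    also have "\<dots> \<le> 2 * K * 1" using total_steps \<open>1 \<le> K\<close> by (intro mult_left_mono) auto
    finally show ?thesis by simp
  qed
  moreover obtain N where "2 * K < real N * \<bar>v x - x\<bar>"
    using ex_less_of_nat_mult[of "\<bar>v x - x\<bar>"] moved by auto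
  ultimately show False by (meson not_le)
qed

lemma Kopell:
  assumes P: "C1_diffeo_plus P P'" and L: "L-lipschitz_on {0..1} (\<lambda>x. ln (P' x))"
    and ab: "0 \<le> a" "a < b" "b \<le> 1" "P a = a" "P b = b"
    and free: "\<forall>z\<in>{a<..<b}. P z \<noteq> z"
    and v: "C1_diffeo_plus v v'" "v' a = 1" "v' b = 1"
    and comm: "\<forall>y\<in>{0..1}. v (P y) = P (v y)"
    and q: "q \<in> {a<..<b}" "v q = q"
    and x: "x \<in> {a<..<b}"
  shows "v x = x"
proof -
  obtain e where e: "e \<in> {a, b}" and to_e: "\<And>y. y \<in> {a<..<b} \<Longrightarrow> (\<lambda>k. (P ^^ k) y) \<longlonglongrightarrow> e"
    using orbit_tendsto_endpoint[OF P ab free] by blast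
  have e01: "e \<in> {0..1}" "v' e = 1" using e ab v by auto
  have inside: "(P ^^ k) y \<in> {a<..<b}" if "y \<in> {a<..<b}" for k y
    using funpow_maps_fixpoint_interval[OF P ab(1,3,4,5) that] .
  have closer: "\<exists>k. \<bar>(P ^^ k) y - e\<bar> < \<bar>w - e\<bar>" if "y \<in> {a<..<b}" "w \<in> {a<..<b}" for y w
  proof -
    have "\<bar>w - e\<bar> > 0" using that e by auto
    from tendstoD[OF to_e[OF that(1)] this] show ?thesis
      by (auto simp: dist_real_def eventually_sequentially)
  qed
  (* All orbits approach e monotonically from the same side, so pushing x past q and then
     q past the image x1 of x traps x1 between q and a point q' of its orbit. *)
  obtain j where j: "\<bar>(P ^^ j) x - e\<bar> < \<bar>q - e\<bar>" using closer[OF x q(1)] by blast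
  define x1 where "x1 = (P ^^ j) x"
  have x1: "x1 \<in> {a<..<b}" using inside[OF x] by (simp add: x1_def)
  obtain K where K: "\<bar>(P ^^ K) q - e\<bar> < \<bar>x1 - e\<bar>" using closer[OF q(1) x1] by blast
  define q' where "q' = (P ^^ K) q"
  define c where "c = min q q'"
  define d where "d = max q q'"
  have q': "q' \<in> {a<..<b}" "v q' = q'"
    using inside[OF q(1)] funpow_commute[OF P v(1) comm, of q 1 K] q ab by (auto simp: q'_def)
  have cd: "0 \<le> c" "c \<le> d" "d \<le> 1" "v c = c" "v d = d"
    using q q' ab by (auto simp: c_def d_def min_def max_def)
  have x1_cd: "x1 \<in> {c..d}"
    using e j K x1 q(1) q' by (auto simp: c_def d_def x1_def q'_def)
  have cd_orbits: "(\<lambda>k. (P ^^ k) c) \<longlonglongrightarrow> e" "(\<lambda>k. (P ^^ k) d) \<longlonglongrightarrow> e"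
    using to_e q(1) q'(1) by (auto simp: c_def d_def min_def max_def)
  have "(\<Sum>i<N. \<bar>(P ^^ i) d - (P ^^ i) c\<bar>) \<le> K" for N
  proof -
    have "\<bar>(P ^^ i) d - (P ^^ i) c\<bar> = \<bar>(P ^^ i) q' - (P ^^ i) q\<bar>" for i
      by (cases "q \<le> q'") (auto simp: c_def d_def abs_minus_commute)
    moreover have "q \<in> {0..1}" using q ab by auto
    ultimately show ?thesis using orbit_shift_gap_sum_le[OF P, where y = q and N = N and M = K] by (simp add: q'_def)
  qed
  then have "v x1 = x1"
    using Kopell_bounded_distortion[OF P v(1) e01 comm cd cd_orbits _ x1_cd]
      iterate_deriv_distortion[OF P L cd(1-3)] by blast
  with x ab show ?thesis by (intro funpow_commute_fixpoint[OF P v(1) comm, of x j]) (auto simp: x1_def)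
qed

section \<open>Roots of C^2 diffeomorphisms\<close>

lemma funpow_root_fixpoint:
  assumes h: "C1_diffeo_plus h h'" and u: "C1_diffeo_plus u u'" and n: "n > 0"
    and roots: "\<forall>x\<in>{0..1}. (u ^^ n) x = (h ^^ n) x"
    and e: "e \<in> {0..1}" "(h ^^ n) e = e"
  shows "h e = e" "u e = e" "u' e = h' e"
proof -
  show he: "h e = e" using funpow_fixed_iff[OF h e(1) n] e(2) by simp
  show ue: "u e = e" using funpow_fixed_iff[OF u e(1) n] e roots by simp
  have "iterate_deriv u u' n e = iterate_deriv h h' n e"
    by (rule C1_diffeo_plus_deriv_unique[OF C1_diffeo_plus_funpow[OF u] C1_diffeo_plus_funpow[OF h] roots e(1)])
  then have "u' e ^ n = h' e ^ n" using he ue by (simp add: iterate_deriv_fixpoint)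
  moreover have "u' e > 0" "h' e > 0"
    using C1_diffeo_plus_deriv_pos[OF u e(1)] C1_diffeo_plus_deriv_pos[OF h e(1)] by auto
  ultimately show "u' e = h' e" using n by (auto intro: power_eq_imp_eq_base)
qed

lemma funpow_root_quotient_commute:
  assumes h: "C1_diffeo_plus h h'" and u: "C1_diffeo_plus u u'"
    and roots: "\<forall>x\<in>{0..1}. (u ^^ n) x = (h ^^ n) x"
  shows "\<forall>y\<in>{0..1}. inv_into {0..1} h (u ((h ^^ n) y)) = (h ^^ n) (inv_into {0..1} h (u y))"
proof
  fix y :: real assume y: "y \<in> {0..1}"
  let ?hi = "inv_into {0..1} h"
  have uy: "u y \<in> {0..1}" using C1_diffeo_plus_in_unit[OF u y] .
  have "u ((h ^^ n) y) = u ((u ^^ n) y)" using roots y by simp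
  also have "\<dots> = (u ^^ n) (u y)" by (rule funpow_swap1)
  also have "\<dots> = (h ^^ n) (u y)" using roots uy by simp
  finally have u_comm: "u ((h ^^ n) y) = (h ^^ n) (u y)" .
  have hi_uy: "?hi (u y) \<in> {0..1}"
    using C1_diffeo_plus_in_unit[OF C1_diffeo_plus_inv_into[OF h] uy] .
  have "(h ^^ n) (u y) = h ((h ^^ n) (?hi (u y)))"
    using C1_diffeo_plus_f_inv_into_f[OF h uy] by (metis funpow_swap1)
  then have "?hi ((h ^^ n) (u y)) = (h ^^ n) (?hi (u y))"
    using C1_diffeo_plus_inv_into_f_f[OF h funpow_in_unit[OF h hi_uy]] by simp
  with u_comm show "?hi (u ((h ^^ n) y)) = (h ^^ n) (?hi (u y))" by simp
qed

lemma funpow_roots_meet: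
  assumes u: "C1_diffeo_plus u u'" and h: "C1_diffeo_plus h h'" and n: "n > 0"
    and ab: "0 \<le> a" "b \<le> 1" "u a = a" "u b = b" "h a = a" "h b = b"
    and x: "x \<in> {a<..<b}" "(u ^^ n) x = (h ^^ n) x"
  obtains q where "q \<in> {a<..<b}" "u q = h q"
proof (rule ccontr)
  assume "\<not> thesis"
  with that have "\<forall>z\<in>{a<..<b}. u z \<noteq> h z" by blast
  moreover have "continuous_on {a..b} u" "continuous_on {a..b} h"
    using C1_diffeo_plus_continuous[OF u] C1_diffeo_plus_continuous[OF h] ab
    by (auto elim!: continuous_on_subset)
  ultimately consider "\<forall>z\<in>{a<..<b}. u z < h z" | "\<forall>z\<in>{a<..<b}. h z < u z"
    using continuous_ne_on_interval_cases by blast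
  then show False
  proof cases
    case 1
    have "(u ^^ n) x < (h ^^ n) x" by (rule funpow_less_funpow[OF u h ab 1 x(1) n])
    with x(2) show False by simp
  next
    case 2
    have "(h ^^ n) x < (u ^^ n) x"
      by (rule funpow_less_funpow[OF h u ab(1,2,5,6,3,4) 2 x(1) n])
    with x(2) show False by simp
  qed
qed

lemma funpow_root_unique_on_component:
  assumes h: "C1_diffeo_plus h h'" and L: "L-lipschitz_on {0..1} (\<lambda>x. ln (h' x))"
    and u: "C1_diffeo_plus u u'" and n: "n > 0"
    and roots: "\<forall>x\<in>{0..1}. (u ^^ n) x = (h ^^ n) x"
    and ab: "0 \<le> a" "a < b" "b \<le> 1" "(h ^^ n) a = a" "(h ^^ n) b = b"
    and free: "\<forall>z\<in>{a<..<b}. (h ^^ n) z \<noteq> z"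
    and x: "x \<in> {a<..<b}"
  shows "u x = h x"
proof -
  let ?hi = "inv_into {0..1} h"
  have x01: "x \<in> {0..1}" and ab01: "a \<in> {0..1}" "b \<in> {0..1}" using x ab by auto
  note fix_a = funpow_root_fixpoint[OF h u n roots ab01(1) ab(4)]
  note fix_b = funpow_root_fixpoint[OF h u n roots ab01(2) ab(5)]
  obtain q where q: "q \<in> {a<..<b}" "u q = h q"
    using funpow_roots_meet[OF u h n ab(1,3) fix_a(2) fix_b(2) fix_a(1) fix_b(1) x] roots x01 by blast
  then have "?hi (u q) = q" using C1_diffeo_plus_inv_into_f_f[OF h] ab by simp
  define v' where "v' y = 1 / h' (?hi (u y)) * u' y" for y
  have v: "C1_diffeo_plus (\<lambda>y. ?hi (u y)) v'"
    unfolding v'_def[abs_def] by (rule C1_diffeo_plus_compose[OF u C1_diffeo_plus_inv_into[OF h]])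
  have v'_ends: "v' a = 1" "v' b = 1"
    using fix_a fix_b C1_diffeo_plus_inv_into_f_f[OF h ab01(1)] C1_diffeo_plus_inv_into_f_f[OF h ab01(2)]
      C1_diffeo_plus_deriv_pos[OF h ab01(1)] C1_diffeo_plus_deriv_pos[OF h ab01(2)]
    by (simp_all add: v'_def)
  obtain L\<phi> where L\<phi>: "L\<phi>-lipschitz_on {0..1} (\<lambda>x. ln (iterate_deriv h h' n x))"
    using lipschitz_ln_iterate_deriv[OF h L] by blast
  have "?hi (u x) = x"
    by (rule Kopell[OF C1_diffeo_plus_funpow[OF h] L\<phi> ab free v v'_ends
          funpow_root_quotient_commute[OF h u roots] q(1) \<open>?hi (u q) = q\<close> x])
  then show ?thesis using C1_diffeo_plus_f_inv_into_f[OF h C1_diffeo_plus_in_unit[OF u x01]] by simp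
qed

theorem C1_diffeo_plus_funpow_root_unique:
  assumes h: "C1_diffeo_plus h h'" and L: "L-lipschitz_on {0..1} (\<lambda>x. ln (h' x))"
    and u: "C1_diffeo_plus u u'" and n: "n > 0"
    and roots: "\<forall>x\<in>{0..1}. (u ^^ n) x = (h ^^ n) x"
    and x: "x \<in> {0..1}"
  shows "u x = h x"
proof (cases "(h ^^ n) x = x")
  case True
  with funpow_root_fixpoint[OF h u n roots x] show ?thesis by simp
next
  case False
  have hn: "C1_diffeo_plus (h ^^ n) (iterate_deriv h h' n)" by (rule C1_diffeo_plus_funpow[OF h])
  obtain a b where "0 \<le> a" "a < x" "x < b" "b \<le> 1" "(h ^^ n) a = a" "(h ^^ n) b = b"
      "\<forall>z\<in>{a<..<b}. (h ^^ n) z \<noteq> z"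
    using fixpoint_free_component[OF C1_diffeo_plus_continuous[OF hn]
        C1_diffeo_plus_fixes_endpoints[OF hn] x False] .
  then show ?thesis using funpow_root_unique_on_component[OF h L u n roots] by auto
qed

lemma funpow_conjugate:
  assumes F: "C1_diffeo_plus F F'" and H: "C1_diffeo_plus H H'" and x: "x \<in> {0..1}"
  shows "((\<lambda>y. F (H (inv_into {0..1} F y))) ^^ k) x = F ((H ^^ k) (inv_into {0..1} F x))"
proof (induction k)
  case 0
  show ?case using C1_diffeo_plus_f_inv_into_f[OF F x] by simp
next
  case (Suc k)
  have "(H ^^ k) (inv_into {0..1} F x) \<in> {0..1}"
    using funpow_in_unit[OF H C1_diffeo_plus_in_unit[OF C1_diffeo_plus_inv_into[OF F] x]] .
  with Suc show ?case using C1_diffeo_plus_inv_into_f_f[OF F] by simp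
qed

lemma funpow_conjugate_root:
  assumes f: "C1_diffeo_plus f f'" and h: "C1_diffeo_plus h h'"
    and root: "\<forall>x\<in>{0..1}. (f ^^ m) x = (h ^^ n) x" and x: "x \<in> {0..1}"
  shows "((\<lambda>y. f (h (inv_into {0..1} f y))) ^^ n) x = (h ^^ n) x"
proof -
  let ?y = "inv_into {0..1} f x"
  have y: "?y \<in> {0..1}" using C1_diffeo_plus_in_unit[OF C1_diffeo_plus_inv_into[OF f] x] .
  have "((\<lambda>y. f (h (inv_into {0..1} f y))) ^^ n) x = f ((f ^^ m) ?y)"
    using funpow_conjugate[OF f h x] root y by simp
  also have "\<dots> = (f ^^ m) (f ?y)" by (rule funpow_swap1)
  also have "\<dots> = (h ^^ n) x" using C1_diffeo_plus_f_inv_into_f[OF f x] root x by simp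
  finally show ?thesis .
qed

theorem lemma5p7:
  fixes g h :: "real \<Rightarrow> real" and m n :: nat
  assumes "m > 0" and "n > 0"
    and "C2_diffeo_plus g" and "C2_diffeo_plus h"
    and "\<forall>x\<in>{0..1}. g ((h ^^ m) (inv_into {0..1} g x)) = (h ^^ n) x"
  shows "\<forall>x\<in>{0..1}. h (g (h (inv_into {0..1} g x))) = g (h (inv_into {0..1} g (h x)))"
proof
  obtain g' where g: "C1_diffeo_plus g g'"
    using C2_diffeo_plus_imp_C1_lipschitz_ln_deriv[OF assms(3)] by blast
  obtain h' L where h: "C1_diffeo_plus h h'" and L: "L-lipschitz_on {0..1} (\<lambda>x. ln (h' x))"
    using C2_diffeo_plus_imp_C1_lipschitz_ln_deriv[OF assms(4)] by blast
  define f where "f x = g (h (inv_into {0..1} g x))" for x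
  obtain f' where f: "C1_diffeo_plus f f'"
    using C1_diffeo_plus_compose[OF C1_diffeo_plus_compose[OF C1_diffeo_plus_inv_into[OF g] h] g]
    unfolding f_def[abs_def] by blast
  define u where "u x = f (h (inv_into {0..1} f x))" for x
  obtain u' where u: "C1_diffeo_plus u u'"
    using C1_diffeo_plus_compose[OF C1_diffeo_plus_compose[OF C1_diffeo_plus_inv_into[OF f] h] f]
    unfolding u_def[abs_def] by blast
  have "\<forall>x\<in>{0..1}. (f ^^ m) x = (h ^^ n) x"
    using funpow_conjugate[OF g h] assms(5) unfolding f_def[abs_def] by simp
  then have "\<forall>x\<in>{0..1}. (u ^^ n) x = (h ^^ n) x"
    using funpow_conjugate_root[OF f h] unfolding u_def[abs_def] by blast
  then have u_eq_h: "u y = h y" if "y \<in> {0..1}" for y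
    using C1_diffeo_plus_funpow_root_unique[OF h L u assms(2) _ that] by blast
  fix x :: real assume x: "x \<in> {0..1}"
  have "h (f x) = u (f x)" using u_eq_h C1_diffeo_plus_in_unit[OF f x] by simp
  also have "\<dots> = f (h x)" using C1_diffeo_plus_inv_into_f_f[OF f x] by (simp add: u_def)
  finally show "h (g (h (inv_into {0..1} g x))) = g (h (inv_into {0..1} g (h x)))"
    by (simp add: f_def)
qed

end
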